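(* Let $\nabla$ be a connection on an anchored vector bundle $(A,a_A)$ over $M$, let $[x,y]^\nabla=\nabla_xy-\nabla_yx$ and $R^\nabla(x,y)z=\nabla_x\nabla_yz-\nabla_y\nabla_xz-\nabla_{[x,y]^\nabla}z$. Then $(A,[\cdot,\cdot]^\nabla,a_A)$ is a Lie algebroid if and only if $$R^\nabla(x,y)z+R^\nabla(y,z)x+R^\nabla(z,x)y=0\quad\text{for all }x,y,z\in\Gamma(A).$$
   Context: A connection on the anchored bundle $(A,a_A)$ (with $a_A:A\to TM$ a bundle map) is an $\mathbb{R}$-bilinear operator $\nabla:\Gamma(A)\times\Gamma(A)\to\Gamma(A)$ with $\nabla_{fx}y=f\nabla_xy$ and $\nabla_x(fy)=a_A(x)(f)\,y+f\nabla_xy$. A Lie algebroid $(A,[\cdot,\cdot],a_A)$ is a skew-symmetric $\mathbb{R}$-bilinear bracket on $\Gamma(A)$ with $[x,fy]=f[x,y]+a_A(x)(f)y$ that satisfies the Jacobi identity. *)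

theory Defs
  imports Complex_Main
begin

text \<open>Algebraic rendering: C-infinity(M) is an abstract commutative real algebra 'f,
  Gamma(A) is a module over it (scalar action smul), the anchor a sends a section
  to a derivation of 'f (= a vector field), C-infinity(M)-linearly in the section.\<close>

definition derivation :: "('f::{real_algebra_1,comm_ring_1} \<Rightarrow> 'f) \<Rightarrow> bool" where
  "derivation D \<longleftrightarrow> linear D \<and> (\<forall>f g. D (f * g) = f * D g + g * D f)"

definition anchored_module ::
  "('f::{real_algebra_1,comm_ring_1} \<Rightarrow> 's::ab_group_add \<Rightarrow> 's) \<Rightarrow> ('s \<Rightarrow> 'f \<Rightarrow> 'f) \<Rightarrow> bool" where
  "anchored_module smul a \<longleftrightarrow>
     module smul \<and>
     (\<forall>x. derivation (a x)) \<and>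
     (\<forall>x y. a (x + y) = (\<lambda>g. a x g + a y g)) \<and>
     (\<forall>f x. a (smul f x) = (\<lambda>g. f * a x g))"

text \<open>R-bilinearity; real scalars act on sections as constant functions.\<close>
definition rbilinear ::
  "('f::{real_algebra_1,comm_ring_1} \<Rightarrow> 's::ab_group_add \<Rightarrow> 's) \<Rightarrow> ('s \<Rightarrow> 's \<Rightarrow> 's) \<Rightarrow> bool" where
  "rbilinear smul B \<longleftrightarrow>
     (\<forall>x y z. B (x + y) z = B x z + B y z) \<and>
     (\<forall>x y z. B x (y + z) = B x y + B x z) \<and>
     (\<forall>(c::real) x y. B (smul (of_real c) x) y = smul (of_real c) (B x y)) \<and>
     (\<forall>(c::real) x y. B x (smul (of_real c) y) = smul (of_real c) (B x y))"

definition connection ::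
  "('f::{real_algebra_1,comm_ring_1} \<Rightarrow> 's::ab_group_add \<Rightarrow> 's) \<Rightarrow> ('s \<Rightarrow> 'f \<Rightarrow> 'f)
     \<Rightarrow> ('s \<Rightarrow> 's \<Rightarrow> 's) \<Rightarrow> bool" where
  "connection smul a nabla \<longleftrightarrow>
     rbilinear smul nabla \<and>
     (\<forall>f x y. nabla (smul f x) y = smul f (nabla x y)) \<and>
     (\<forall>f x y. nabla x (smul f y) = smul (a x f) y + smul f (nabla x y))"

definition lie_algebroid ::
  "('f::{real_algebra_1,comm_ring_1} \<Rightarrow> 's::ab_group_add \<Rightarrow> 's) \<Rightarrow> ('s \<Rightarrow> 's \<Rightarrow> 's)
     \<Rightarrow> ('s \<Rightarrow> 'f \<Rightarrow> 'f) \<Rightarrow> bool" where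
  "lie_algebroid smul br a \<longleftrightarrow>
     anchored_module smul a \<and>
     rbilinear smul br \<and>
     (\<forall>x y. br x y = - br y x) \<and>
     (\<forall>f x y. br x (smul f y) = smul f (br x y) + smul (a x f) y) \<and>
     (\<forall>x y z. br x (br y z) + br y (br z x) + br z (br x y) = 0)"

definition conn_bracket :: "('s::ab_group_add \<Rightarrow> 's \<Rightarrow> 's) \<Rightarrow> 's \<Rightarrow> 's \<Rightarrow> 's" where
  "conn_bracket nabla x y = nabla x y - nabla y x"

definition curvature :: "('s::ab_group_add \<Rightarrow> 's \<Rightarrow> 's) \<Rightarrow> 's \<Rightarrow> 's \<Rightarrow> 's \<Rightarrow> 's" where
  "curvature nabla x y z =
     nabla x (nabla y z) - nabla y (nabla x z) - nabla (conn_bracket nabla x y) z"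

end

theory Submission
  imports Defs
begin

text \<open>The bracket [x,y] = nabla x y - nabla y x of a connection is automatically skew-symmetric,
  R-bilinear and satisfies the anchored Leibniz rule, because nabla is C-infinity-linear in its
  first slot and a derivation along the anchor in its second. So it is a Lie algebroid bracket
  exactly when it satisfies the Jacobi identity, and expanding the definitions shows that its
  Jacobiator equals the cyclic sum of the curvature; this last identity uses nothing but
  additivity of nabla in its second argument.\<close>

lemma connection_additive_right:
  assumes "connection smul a nabla"
  shows "additive (nabla x)"
  using assms by (intro additive.intro) (simp add: connection_def rbilinear_def)

lemma conn_bracket_jacobiator_eq_curvature_cyclic:
  assumes "\<And>x. additive (nabla x)"
  shows "conn_bracket nabla x (conn_bracket nabla y z) + conn_bracket nabla y (conn_bracket nabla z x)
      + conn_bracket nabla z (conn_bracket nabla x y)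
    = curvature nabla x y z + curvature nabla y z x + curvature nabla z x y"
  unfolding conn_bracket_def curvature_def additive.diff[OF assms] by (simp add: algebra_simps)

lemma conn_bracket_skew: "conn_bracket nabla x y = - conn_bracket nabla y x"
  by (simp add: conn_bracket_def)

lemma rbilinear_conn_bracket:
  assumes "module smul" and "rbilinear smul nabla"
  shows "rbilinear smul (conn_bracket nabla)"
  using assms unfolding rbilinear_def conn_bracket_def
  by (simp add: module.scale_right_diff_distrib algebra_simps)

lemma conn_bracket_smul_right:
  assumes "module smul" and "connection smul a nabla"
  shows "conn_bracket nabla x (smul f y) = smul f (conn_bracket nabla x y) + smul (a x f) y"
  using assms unfolding connection_def conn_bracket_def
  by (simp add: module.scale_right_diff_distrib algebra_simps)

lemma lie_algebroid_iff_jacobi: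
  assumes "anchored_module smul a" and "rbilinear smul br"
    and "\<And>x y. br x y = - br y x"
    and "\<And>f x y. br x (smul f y) = smul f (br x y) + smul (a x f) y"
  shows "lie_algebroid smul br a \<longleftrightarrow> (\<forall>x y z. br x (br y z) + br y (br z x) + br z (br x y) = 0)"
  using assms unfolding lie_algebroid_def by blast

theorem proposition2p7:
  fixes smul :: "'f::{real_algebra_1,comm_ring_1} \<Rightarrow> 's::ab_group_add \<Rightarrow> 's"
    and a :: "'s \<Rightarrow> 'f \<Rightarrow> 'f"
    and nabla :: "'s \<Rightarrow> 's \<Rightarrow> 's"
  assumes "anchored_module smul a"
    and "connection smul a nabla"
  shows "lie_algebroid smul (conn_bracket nabla) a \<longleftrightarrow>
    (\<forall>x y z. curvature nabla x y z + curvature nabla y z x + curvature nabla z x y = 0)"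
proof -
  have "module smul"
    using assms(1) by (simp add: anchored_module_def)
  moreover have "rbilinear smul nabla"
    using assms(2) by (simp add: connection_def)
  ultimately have "lie_algebroid smul (conn_bracket nabla) a \<longleftrightarrow>
      (\<forall>x y z. conn_bracket nabla x (conn_bracket nabla y z) + conn_bracket nabla y (conn_bracket nabla z x)
        + conn_bracket nabla z (conn_bracket nabla x y) = 0)"
    using assms by (intro lie_algebroid_iff_jacobi rbilinear_conn_bracket conn_bracket_skew
        conn_bracket_smul_right)
  then show ?thesis
    by (simp only: conn_bracket_jacobiator_eq_curvature_cyclic connection_additive_right[OF assms(2)])
qed

end
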